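(* Let $\varphi=\forall x_1\exists y_1\cdots\forall x_k\exists y_k\,P$ be a positive Horn sentence over a finite relational signature $\sigma$ with $P$ a conjunction of equality-free atomic $\sigma$-formulas. Let $R\in\sigma$ be $p$-ary and let $t_1,\dots,t_p,t'\in T_\varphi(C_\omega)$ be such that $\mathrm{rank}(t')$ is distinct from each of $\mathrm{rank}(t_1),\dots,\mathrm{rank}(t_p)$. Then for every $t''\in T_\varphi(C_\omega)$: if $R(t_1,\dots,t_p)$ holds in $\mathcal{T}_\varphi(C_\omega)$, then $R(t_1[t'/t''],\dots,t_p[t'/t''])$ holds in $\mathcal{T}_\varphi(C_\omega)$.
   Context: Let $f_1,\dots,f_k$ be new function symbols, $f_i$ of arity $i$, $\mathrm{Sk}(\varphi)=\forall x_1\cdots\forall x_k\,P(x_1,f_1(x_1),\dots,x_k,f_k(x_1,\dots,x_k))$, and $C_\omega=\{c_1,c_2,\dots\}$ new constants. $T_\varphi(C_\omega)$ is the set of closed terms built from $C_\omega$ with the $f_i$; the rank of a term is the maximal nesting depth of function symbols in it (constants have rank $0$). $\mathcal{T}_\varphi(C_\omega)$ is the $\sigma$-structure on $T_\varphi(C_\omega)$ in which $R(s_1,\dots,s_p)$ holds iff it is obtained from an atom of the matrix of $\mathrm{Sk}(\varphi)$ by substituting terms for $x_1,\dots,x_k$. For terms $t,t',t''$, $t[t'/t'']$ is the term obtained from $t$ by replacing every occurrence of the subterm $t'$ by $t''$. *)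

theory Defs
  imports Main
begin

(* Closed terms over the constants C_omega = {c_0, c_1, ...} and the Skolem
   function symbols f_i (Fn i ts stands for f_i applied to ts). *)
datatype trm = Cst nat | Fn nat "trm list"

datatype var = X nat | Y nat

(* membership in T_phi(C_omega) for a sentence with k quantifier blocks:
   f_i has arity i and 1 <= i <= k *)
fun wf_trm :: "nat \<Rightarrow> trm \<Rightarrow> bool" where
  "wf_trm k (Cst c) = True"
| "wf_trm k (Fn i ts) = (1 \<le> i \<and> i \<le> k \<and> length ts = i \<and> (\<forall>t\<in>set ts. wf_trm k t))"

definition Terms :: "nat \<Rightarrow> trm set" where
  "Terms k = {t. wf_trm k t}"

fun rank :: "trm \<Rightarrow> nat" where
  "rank (Cst c) = 0"
| "rank (Fn i ts) = Suc (fold max (map rank ts) 0)"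

(* t[t'/t'']: replace every occurrence of the subterm t' by t'' *)
fun replace :: "trm \<Rightarrow> trm \<Rightarrow> trm \<Rightarrow> trm" where
  "replace t' t'' t = (if t = t' then t'' else
     (case t of Cst c \<Rightarrow> Cst c | Fn i ts \<Rightarrow> Fn i (map (replace t' t'') ts)))"

definition wf_atom :: "'r set \<Rightarrow> ('r \<Rightarrow> nat) \<Rightarrow> nat \<Rightarrow> 'r \<times> var list \<Rightarrow> bool" where
  "wf_atom \<sigma> ar k a = (fst a \<in> \<sigma> \<and> length (snd a) = ar (fst a) \<and>
     (\<forall>z\<in>set (snd a). (\<exists>j. 1 \<le> j \<and> j \<le> k \<and> (z = X j \<or> z = Y j))))"

(* positive Horn sentence in the given prefix form: matrix P is a conjunction
   (list) of equality-free atoms *)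
definition horn_sentence :: "'r set \<Rightarrow> ('r \<Rightarrow> nat) \<Rightarrow> nat \<Rightarrow> ('r \<times> var list) list \<Rightarrow> bool" where
  "horn_sentence \<sigma> ar k P = (finite \<sigma> \<and> (\<forall>a\<in>set P. wf_atom \<sigma> ar k a))"

(* value of a matrix variable in Sk(phi) under the assignment x_j := u j:
   x_j |-> u j, y_i |-> f_i(u 1, ..., u i) *)
fun sk_inst :: "(nat \<Rightarrow> trm) \<Rightarrow> var \<Rightarrow> trm" where
  "sk_inst u (X j) = u j"
| "sk_inst u (Y i) = Fn i (map u [1..<Suc i])"

(* R(s_1..s_p) holds in the term structure T_phi(C_omega) iff it is obtained
   from an atom of the matrix of Sk(phi) by substituting terms for x_1..x_k *)
definition holdsT :: "nat \<Rightarrow> ('r \<times> var list) list \<Rightarrow> 'r \<Rightarrow> trm list \<Rightarrow> bool" where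
  "holdsT k P R ss = (\<exists>zs. (R, zs) \<in> set P \<and>
     (\<exists>u. (\<forall>j. 1 \<le> j \<and> j \<le> k \<longrightarrow> u j \<in> Terms k) \<and> ss = map (sk_inst u) zs))"

end

theory Submission
  imports Defs
begin

text \<open>Every atom of the term structure is an instance \<open>R(sk_inst u z\<^sub>1, \<dots>, sk_inst u z\<^sub>p)\<close> of a
matrix atom. Since \<open>t'\<close> has a rank different from all \<open>t\<^sub>i\<close>, no argument is itself \<open>t'\<close>, so the
replacement never fires at the top of an argument and passes through \<open>sk_inst\<close>: replacing
in \<open>sk_inst u z\<close> gives \<open>sk_inst u' z\<close> with \<open>u' j = u j[t'/t'']\<close>. The new atom is therefore the
instance of the same matrix atom under the assignment \<open>u'\<close>.\<close>

lemma replace_Cst [simp]: "replace t' t'' (Cst c) = (if Cst c = t' then t'' else Cst c)"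
  by simp

lemma replace_Fn [simp]:
  "replace t' t'' (Fn i ts) = (if Fn i ts = t' then t'' else Fn i (map (replace t' t'') ts))"
  by simp

declare replace.simps [simp del]

lemma wf_trm_replace: "wf_trm k t'' \<Longrightarrow> wf_trm k t \<Longrightarrow> wf_trm k (replace t' t'' t)"
  by (induction t) auto

lemma replace_sk_inst:
  assumes "sk_inst u z \<noteq> t'"
  shows "replace t' t'' (sk_inst u z) = sk_inst (replace t' t'' \<circ> u) z"
  using assms by (cases z) auto

lemma holdsT_replace:
  assumes holds: "holdsT k P R ts"
    and t'': "t'' \<in> Terms k"
    and not_arg: "t' \<notin> set ts"
  shows "holdsT k P R (map (replace t' t'') ts)"
proof -
  obtain zs u where atom: "(R, zs) \<in> set P"
    and u: "\<forall>j. 1 \<le> j \<and> j \<le> k \<longrightarrow> u j \<in> Terms k"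
    and ts: "ts = map (sk_inst u) zs"
    using holds unfolding holdsT_def by blast
  let ?u' = "replace t' t'' \<circ> u"
  have u': "\<forall>j. 1 \<le> j \<and> j \<le> k \<longrightarrow> ?u' j \<in> Terms k"
    using u t'' wf_trm_replace unfolding Terms_def by auto
  have "map (replace t' t'') ts = map (sk_inst ?u') zs"
    using not_arg unfolding ts by (auto intro!: replace_sk_inst)
  then show ?thesis
    unfolding holdsT_def using atom u' by blast
qed

theorem mainTheorem11:
  fixes \<sigma> :: "'r set" and ar :: "'r \<Rightarrow> nat" and k :: nat
    and P :: "('r \<times> var list) list" and R :: 'r
    and ts :: "trm list" and t' t'' :: trm
  assumes "horn_sentence \<sigma> ar k P"
    and "R \<in> \<sigma>"
    and "length ts = ar R"
    and "\<forall>t\<in>set ts. t \<in> Terms k"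
    and "t' \<in> Terms k"
    and "\<forall>t\<in>set ts. rank t' \<noteq> rank t"
    and "t'' \<in> Terms k"
    and "holdsT k P R ts"
  shows "holdsT k P R (map (replace t' t'') ts)"
proof -
  have "t' \<notin> set ts"
    using assms(6) by blast
  then show ?thesis
    by (rule holdsT_replace[OF assms(8,7)])
qed

end
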